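(* There is a one-to-one correspondence between skeletal $2$-term homotopy Nijenhuis algebras and triples consisting of a Nijenhuis algebra $((A,\cdot),N)$, a Nijenhuis bimodule $((M,\triangleright,\triangleleft),N_M)$ over it, and a $3$-cocycle $(\chi,F)\in Z^3_{\mathrm{NAlg}}((A,N);(M,N_M))$. Explicitly, a skeletal $2$-term homotopy Nijenhuis algebra $((\mathcal{A}_1\xrightarrow{0}\mathcal{A}_0,\mu_2,\mu_3),(\mathcal{N}_0,\mathcal{N}_1,\mathcal{N}_2))$ corresponds to $A=\mathcal{A}_0$ with $a\cdot b=\mu_2(a,b)$, $N=\mathcal{N}_0$, $M=\mathcal{A}_1$ with $a\triangleright u=\mu_2(a,u)$, $u\triangleleft a=\mu_2(u,a)$, $N_M=\mathcal{N}_1$, and $(\chi,F)=(\mu_3,\mathcal{N}_2)$.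
   Context: Over a field of characteristic $0$. A 2-term $A_\infty$-algebra $(\mathcal{A}_1\xrightarrow{\partial}\mathcal{A}_0,\mu_2,\mu_3)$: linear $\partial$, bilinear $\mu_2:\mathcal{A}_i\times\mathcal{A}_j\to\mathcal{A}_{i+j}$ ($0\le i,j,i+j\le1$), trilinear $\mu_3:\mathcal{A}_0^{\times3}\to\mathcal{A}_1$, with, for $a,b,c,d\in\mathcal{A}_0$, $u,v\in\mathcal{A}_1$: $\partial\mu_2(a,u)=\mu_2(a,\partial u)$; $\partial\mu_2(u,a)=\mu_2(\partial u,a)$; $\mu_2(\partial u,v)=\mu_2(u,\partial v)$; $\partial\mu_3(a,b,c)=\mu_2(\mu_2(a,b),c)-\mu_2(a,\mu_2(b,c))$; $\mu_3(a,b,\partial u)=\mu_2(\mu_2(a,b),u)-\mu_2(a,\mu_2(b,u))$; $\mu_3(a,\partial u,b)=\mu_2(\mu_2(a,u),b)-\mu_2(a,\mu_2(u,b))$; $\mu_3(\partial u,a,b)=\mu_2(\mu_2(u,a),b)-\mu_2(u,\mu_2(a,b))$; $\mu_2(a,\mu_3(b,c,d))-\mu_3(\mu_2(a,b),c,d)+\mu_3(a,\mu_2(b,c),d)-\mu_3(a,b,\mu_2(c,d))+\mu_2(\mu_3(a,b,c),d)=0$. Write $ab=\mu_2(a,b)$ etc. A homotopy Nijenhuis operator is $(\mathcal{N}_0:\mathcal{A}_0\to\mathcal{A}_0,\mathcal{N}_1:\mathcal{A}_1\to\mathcal{A}_1,\mathcal{N}_2:\mathcal{A}_0\times\mathcal{A}_0\to\mathcal{A}_1)$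 with: $\partial\mathcal{N}_1=\mathcal{N}_0\partial$; $\mathcal{N}_0(\mathcal{N}_0(a)b+a\mathcal{N}_0(b)-\mathcal{N}_0(ab))-\mathcal{N}_0(a)\mathcal{N}_0(b)=\partial\mathcal{N}_2(a,b)$; $\mathcal{N}_1(\mathcal{N}_0(a)u+a\mathcal{N}_1(u)-\mathcal{N}_1(au))-\mathcal{N}_0(a)\mathcal{N}_1(u)=\mathcal{N}_2(a,\partial u)$; $\mathcal{N}_1(\mathcal{N}_1(u)a+u\mathcal{N}_0(a)-\mathcal{N}_1(ua))-\mathcal{N}_1(u)\mathcal{N}_0(a)=\mathcal{N}_2(\partial u,a)$; and, writing $a\cdot_{\mathcal{N}}b=\mathcal{N}_0(a)b+a\mathcal{N}_0(b)-\mathcal{N}_0(ab)$: $\mathcal{N}_0(a)\mathcal{N}_2(b,c)-\mathcal{N}_2(a,b)\mathcal{N}_0(c)-\mathcal{N}_2(a\cdot_{\mathcal{N}}b,c)+\mathcal{N}_2(a,b\cdot_{\mathcal{N}}c)-\mathcal{N}_1\big(a\mathcal{N}_2(b,c)-\mathcal{N}_2(ab,c)+\mathcal{N}_2(a,bc)-\mathcal{N}_2(a,b)c\big)=\mu_3(\mathcal{N}_0a,\mathcal{N}_0b,\mathcal{N}_0c)-\mathcal{N}_1\mu_3(\mathcal{N}_0a,\mathcal{N}_0b,c)-\mathcal{N}_1\mu_3(\mathcal{N}_0a,b,\mathcal{N}_0c)-\mathcal{N}_1\mu_3(a,\mathcal{N}_0b,\mathcal{N}_0c)+\mathcal{N}_1^2\mu_3(\mathcal{N}_0a,b,c)+\mathcal{N}_1^2\mu_3(a,\mathcal{N}_0b,c)+\mathcal{N}_1^2\mu_3(a,b,\mathcal{N}_0c)-\mathcal{N}_1^3\mu_3(a,b,c)$.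 A 2-term homotopy Nijenhuis algebra is such a pair; skeletal means $\partial=0$. Nijenhuis algebra: associative $(A,\cdot)$ with linear $N$, $N(a)N(b)=N(N(a)b+aN(b)-N(ab))$. Nijenhuis bimodule: $A$-bimodule with $N_M$ satisfying $N(a)\triangleright N_M(u)=N_M(N(a)\triangleright u+a\triangleright N_M(u)-N_M(a\triangleright u))$, $N_M(u)\triangleleft N(a)=N_M(N_M(u)\triangleleft a+u\triangleleft N(a)-N_M(u\triangleleft a))$. $C^3_{\mathrm{NAlg}}=\mathrm{Hom}(A^{\otimes3},M)\oplus\mathrm{Hom}(A^{\otimes2},M)$ and $(\chi,F)$ is a 3-cocycle iff $\delta_{\mathrm{Hoch}}\chi=0$ and $d_{N,N_M}F-\partial^{N,N_M}\chi=0$, where $(\delta_{\mathrm{Hoch}}f)(a_1,\dots,a_{n+1})=a_1\triangleright f(a_2,\dots)+\sum_{i=1}^n(-1)^if(\dots,a_ia_{i+1},\dots)+(-1)^{n+1}f(a_1,\dots,a_n)\triangleleft a_{n+1}$; $(d_{N,N_M}F)(a_1,\dots,a_{n+1})=N(a_1)\triangleright F(a_2,\dots,a_{n+1})-(-1)^nF(a_1,\dots,a_n)\triangleleft N(a_{n+1})+\sum_{i=1}^n(-1)^iF(a_1,\dots,a_{i-1},N(a_i)a_{i+1}+a_iN(a_{i+1})-N(a_ia_{i+1}),\dots,a_{n+1})-N_M((\delta_{\mathrm{Hoch}}F)(a_1,\dots,a_{n+1}))$; $\partial^{N,N_M}(f)(a_1,\dots,a_n)=\sum_{S\subseteq\{1..n\}}(-1)^{|S|}N_M^{|S|}(f(b_1,\dots,b_n))$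 with $b_i=a_i$ for $i\in S$, $b_i=N(a_i)$ otherwise. *)

theory Defs
  imports Complex_Main
begin

text \<open>Vector spaces over a field 'k are given by scalar multiplications
  (locale Vector_Spaces.vector_space); linear maps by Vector_Spaces.linear.\<close>

definition bilin ::
  "('k::field \<Rightarrow> 'a::ab_group_add \<Rightarrow> 'a) \<Rightarrow> ('k \<Rightarrow> 'b::ab_group_add \<Rightarrow> 'b) \<Rightarrow> ('k \<Rightarrow> 'c::ab_group_add \<Rightarrow> 'c)
    \<Rightarrow> ('a \<Rightarrow> 'b \<Rightarrow> 'c) \<Rightarrow> bool" where
  "bilin s1 s2 s3 f \<longleftrightarrow>
     (\<forall>x. Vector_Spaces.linear s2 s3 (f x)) \<and> (\<forall>y. Vector_Spaces.linear s1 s3 (\<lambda>x. f x y))"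

definition trilin ::
  "('k::field \<Rightarrow> 'a::ab_group_add \<Rightarrow> 'a) \<Rightarrow> ('k \<Rightarrow> 'c::ab_group_add \<Rightarrow> 'c)
    \<Rightarrow> ('a \<Rightarrow> 'a \<Rightarrow> 'a \<Rightarrow> 'c) \<Rightarrow> bool" where
  "trilin s1 s3 f \<longleftrightarrow>
     (\<forall>x y. Vector_Spaces.linear s1 s3 (f x y)) \<and>
     (\<forall>x z. Vector_Spaces.linear s1 s3 (\<lambda>y. f x y z)) \<and>
     (\<forall>y z. Vector_Spaces.linear s1 s3 (\<lambda>x. f x y z))"

text \<open>2-term A-infinity algebra (A1 --d--> A0, mu2, mu3). mu2 is split into its
  components m00 : A0 x A0 -> A0, m01 : A0 x A1 -> A1, m10 : A1 x A0 -> A1.\<close>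

definition two_term_Ainf ::
  "('k::field \<Rightarrow> 'a::ab_group_add \<Rightarrow> 'a) \<Rightarrow> ('k \<Rightarrow> 'm::ab_group_add \<Rightarrow> 'm) \<Rightarrow> ('m \<Rightarrow> 'a)
   \<Rightarrow> ('a \<Rightarrow> 'a \<Rightarrow> 'a) \<Rightarrow> ('a \<Rightarrow> 'm \<Rightarrow> 'm) \<Rightarrow> ('m \<Rightarrow> 'a \<Rightarrow> 'm) \<Rightarrow> ('a \<Rightarrow> 'a \<Rightarrow> 'a \<Rightarrow> 'm) \<Rightarrow> bool" where
  "two_term_Ainf sA sM d m00 m01 m10 m3 \<longleftrightarrow>
     Vector_Spaces.linear sM sA d \<and>
     bilin sA sA sA m00 \<and> bilin sA sM sM m01 \<and> bilin sM sA sM m10 \<and> trilin sA sM m3 \<and>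
     (\<forall>a u. d (m01 a u) = m00 a (d u)) \<and>
     (\<forall>u a. d (m10 u a) = m00 (d u) a) \<and>
     (\<forall>u v. m01 (d u) v = m10 u (d v)) \<and>
     (\<forall>a b c. d (m3 a b c) = m00 (m00 a b) c - m00 a (m00 b c)) \<and>
     (\<forall>a b u. m3 a b (d u) = m01 (m00 a b) u - m01 a (m01 b u)) \<and>
     (\<forall>a u b. m3 a (d u) b = m10 (m01 a u) b - m01 a (m10 u b)) \<and>
     (\<forall>u a b. m3 (d u) a b = m10 (m10 u a) b - m10 u (m00 a b)) \<and>
     (\<forall>a b c e. m01 a (m3 b c e) - m3 (m00 a b) c e + m3 a (m00 b c) e
                 - m3 a b (m00 c e) + m10 (m3 a b c) e = 0)"

definition nij_prod :: "('a \<Rightarrow> 'a \<Rightarrow> 'a::ab_group_add) \<Rightarrow> ('a \<Rightarrow> 'a) \<Rightarrow> 'a \<Rightarrow> 'a \<Rightarrow> 'a" where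
  "nij_prod m N a b = m (N a) b + m a (N b) - N (m a b)"

definition homotopy_Nijenhuis_op ::
  "('k::field \<Rightarrow> 'a::ab_group_add \<Rightarrow> 'a) \<Rightarrow> ('k \<Rightarrow> 'm::ab_group_add \<Rightarrow> 'm) \<Rightarrow> ('m \<Rightarrow> 'a)
   \<Rightarrow> ('a \<Rightarrow> 'a \<Rightarrow> 'a) \<Rightarrow> ('a \<Rightarrow> 'm \<Rightarrow> 'm) \<Rightarrow> ('m \<Rightarrow> 'a \<Rightarrow> 'm) \<Rightarrow> ('a \<Rightarrow> 'a \<Rightarrow> 'a \<Rightarrow> 'm)
   \<Rightarrow> ('a \<Rightarrow> 'a) \<Rightarrow> ('m \<Rightarrow> 'm) \<Rightarrow> ('a \<Rightarrow> 'a \<Rightarrow> 'm) \<Rightarrow> bool" where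
  "homotopy_Nijenhuis_op sA sM d m00 m01 m10 m3 N0 N1 N2 \<longleftrightarrow>
     Vector_Spaces.linear sA sA N0 \<and> Vector_Spaces.linear sM sM N1 \<and> bilin sA sA sM N2 \<and>
     (\<forall>u. d (N1 u) = N0 (d u)) \<and>
     (\<forall>a b. N0 (nij_prod m00 N0 a b) - m00 (N0 a) (N0 b) = d (N2 a b)) \<and>
     (\<forall>a u. N1 (m01 (N0 a) u + m01 a (N1 u) - N1 (m01 a u)) - m01 (N0 a) (N1 u) = N2 a (d u)) \<and>
     (\<forall>u a. N1 (m10 (N1 u) a + m10 u (N0 a) - N1 (m10 u a)) - m10 (N1 u) (N0 a) = N2 (d u) a) \<and>
     (\<forall>a b c.
        m01 (N0 a) (N2 b c) - m10 (N2 a b) (N0 c) - N2 (nij_prod m00 N0 a b) c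
        + N2 a (nij_prod m00 N0 b c)
        - N1 (m01 a (N2 b c) - N2 (m00 a b) c + N2 a (m00 b c) - m10 (N2 a b) c)
      = m3 (N0 a) (N0 b) (N0 c) - N1 (m3 (N0 a) (N0 b) c) - N1 (m3 (N0 a) b (N0 c))
        - N1 (m3 a (N0 b) (N0 c)) + (N1 ^^ 2) (m3 (N0 a) b c) + (N1 ^^ 2) (m3 a (N0 b) c)
        + (N1 ^^ 2) (m3 a b (N0 c)) - (N1 ^^ 3) (m3 a b c))"

definition skeletal_2term_hNA ::
  "('k::field \<Rightarrow> 'a::ab_group_add \<Rightarrow> 'a) \<Rightarrow> ('k \<Rightarrow> 'm::ab_group_add \<Rightarrow> 'm)
   \<Rightarrow> ('a \<Rightarrow> 'a \<Rightarrow> 'a) \<Rightarrow> ('a \<Rightarrow> 'm \<Rightarrow> 'm) \<Rightarrow> ('m \<Rightarrow> 'a \<Rightarrow> 'm) \<Rightarrow> ('a \<Rightarrow> 'a \<Rightarrow> 'a \<Rightarrow> 'm)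
   \<Rightarrow> ('a \<Rightarrow> 'a) \<Rightarrow> ('m \<Rightarrow> 'm) \<Rightarrow> ('a \<Rightarrow> 'a \<Rightarrow> 'm) \<Rightarrow> bool" where
  "skeletal_2term_hNA sA sM m00 m01 m10 m3 N0 N1 N2 \<longleftrightarrow>
     two_term_Ainf sA sM (\<lambda>_. 0) m00 m01 m10 m3 \<and>
     homotopy_Nijenhuis_op sA sM (\<lambda>_. 0) m00 m01 m10 m3 N0 N1 N2"

definition Nijenhuis_algebra ::
  "('k::field \<Rightarrow> 'a::ab_group_add \<Rightarrow> 'a) \<Rightarrow> ('a \<Rightarrow> 'a \<Rightarrow> 'a) \<Rightarrow> ('a \<Rightarrow> 'a) \<Rightarrow> bool" where
  "Nijenhuis_algebra sA m N \<longleftrightarrow>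
     bilin sA sA sA m \<and> (\<forall>a b c. m (m a b) c = m a (m b c)) \<and>
     Vector_Spaces.linear sA sA N \<and>
     (\<forall>a b. m (N a) (N b) = N (nij_prod m N a b))"

definition Nijenhuis_bimodule ::
  "('k::field \<Rightarrow> 'a::ab_group_add \<Rightarrow> 'a) \<Rightarrow> ('k \<Rightarrow> 'm::ab_group_add \<Rightarrow> 'm)
   \<Rightarrow> ('a \<Rightarrow> 'a \<Rightarrow> 'a) \<Rightarrow> ('a \<Rightarrow> 'a) \<Rightarrow> ('a \<Rightarrow> 'm \<Rightarrow> 'm) \<Rightarrow> ('m \<Rightarrow> 'a \<Rightarrow> 'm) \<Rightarrow> ('m \<Rightarrow> 'm) \<Rightarrow> bool" where
  "Nijenhuis_bimodule sA sM m N l r NM \<longleftrightarrow>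
     bilin sA sM sM l \<and> bilin sM sA sM r \<and>
     (\<forall>a b u. l (m a b) u = l a (l b u)) \<and>
     (\<forall>a u b. r (l a u) b = l a (r u b)) \<and>
     (\<forall>u a b. r (r u a) b = r u (m a b)) \<and>
     Vector_Spaces.linear sM sM NM \<and>
     (\<forall>a u. l (N a) (NM u) = NM (l (N a) u + l a (NM u) - NM (l a u))) \<and>
     (\<forall>u a. r (NM u) (N a) = NM (r (NM u) a + r u (N a) - NM (r u a)))"

definition hoch_delta2 ::
  "('a \<Rightarrow> 'a \<Rightarrow> 'a) \<Rightarrow> ('a \<Rightarrow> 'm \<Rightarrow> 'm) \<Rightarrow> ('m \<Rightarrow> 'a \<Rightarrow> 'm::ab_group_add) \<Rightarrow> ('a \<Rightarrow> 'a \<Rightarrow> 'm)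
   \<Rightarrow> 'a \<Rightarrow> 'a \<Rightarrow> 'a \<Rightarrow> 'm" where
  "hoch_delta2 m l r F a1 a2 a3 = l a1 (F a2 a3) - F (m a1 a2) a3 + F a1 (m a2 a3) - r (F a1 a2) a3"

definition hoch_delta3 ::
  "('a \<Rightarrow> 'a \<Rightarrow> 'a) \<Rightarrow> ('a \<Rightarrow> 'm \<Rightarrow> 'm) \<Rightarrow> ('m \<Rightarrow> 'a \<Rightarrow> 'm::ab_group_add) \<Rightarrow> ('a \<Rightarrow> 'a \<Rightarrow> 'a \<Rightarrow> 'm)
   \<Rightarrow> 'a \<Rightarrow> 'a \<Rightarrow> 'a \<Rightarrow> 'a \<Rightarrow> 'm" where
  "hoch_delta3 m l r f a1 a2 a3 a4 = l a1 (f a2 a3 a4) - f (m a1 a2) a3 a4 + f a1 (m a2 a3) a4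
     - f a1 a2 (m a3 a4) + r (f a1 a2 a3) a4"

definition d_NNM2 ::
  "('a \<Rightarrow> 'a \<Rightarrow> 'a::ab_group_add) \<Rightarrow> ('a \<Rightarrow> 'a) \<Rightarrow> ('a \<Rightarrow> 'm \<Rightarrow> 'm) \<Rightarrow> ('m \<Rightarrow> 'a \<Rightarrow> 'm::ab_group_add)
   \<Rightarrow> ('m \<Rightarrow> 'm) \<Rightarrow> ('a \<Rightarrow> 'a \<Rightarrow> 'm) \<Rightarrow> 'a \<Rightarrow> 'a \<Rightarrow> 'a \<Rightarrow> 'm" where
  "d_NNM2 m N l r NM F a1 a2 a3 =
     l (N a1) (F a2 a3) - r (F a1 a2) (N a3)
     - F (nij_prod m N a1 a2) a3 + F a1 (nij_prod m N a2 a3)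
     - NM (hoch_delta2 m l r F a1 a2 a3)"

definition partial_NNM3 ::
  "('a \<Rightarrow> 'a) \<Rightarrow> ('m \<Rightarrow> 'm::ab_group_add) \<Rightarrow> ('a \<Rightarrow> 'a \<Rightarrow> 'a \<Rightarrow> 'm) \<Rightarrow> 'a \<Rightarrow> 'a \<Rightarrow> 'a \<Rightarrow> 'm" where
  "partial_NNM3 N NM f a1 a2 a3 =
     (\<Sum>S\<in>Pow {1::nat, 2, 3}.
        (if even (card S) then id else uminus)
          ((NM ^^ card S)
            (f (if 1 \<in> S then a1 else N a1) (if 2 \<in> S then a2 else N a2) (if 3 \<in> S then a3 else N a3))))"

definition NAlg_3cocycle ::
  "('k::field \<Rightarrow> 'a::ab_group_add \<Rightarrow> 'a) \<Rightarrow> ('k \<Rightarrow> 'm::ab_group_add \<Rightarrow> 'm)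
   \<Rightarrow> ('a \<Rightarrow> 'a \<Rightarrow> 'a) \<Rightarrow> ('a \<Rightarrow> 'a) \<Rightarrow> ('a \<Rightarrow> 'm \<Rightarrow> 'm) \<Rightarrow> ('m \<Rightarrow> 'a \<Rightarrow> 'm) \<Rightarrow> ('m \<Rightarrow> 'm)
   \<Rightarrow> ('a \<Rightarrow> 'a \<Rightarrow> 'a \<Rightarrow> 'm) \<Rightarrow> ('a \<Rightarrow> 'a \<Rightarrow> 'm) \<Rightarrow> bool" where
  "NAlg_3cocycle sA sM m N l r NM chi F \<longleftrightarrow>
     trilin sA sM chi \<and> bilin sA sA sM F \<and>
     (\<forall>a1 a2 a3 a4. hoch_delta3 m l r chi a1 a2 a3 a4 = 0) \<and>
     (\<forall>a1 a2 a3. d_NNM2 m N l r NM F a1 a2 a3 - partial_NNM3 N NM chi a1 a2 a3 = 0)"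

end

theory Submission
  imports Defs
begin

text \<open>With zero differential every axiom of a 2-term homotopy Nijenhuis algebra either
  degenerates to \<open>0 = 0\<close> by multilinearity or becomes exactly one axiom of the triple:
  the equation for \<open>\<partial> \<mu>3\<close> is associativity, the three equations for \<open>\<mu>3\<close> with an
  argument \<open>\<partial> u\<close> are the bimodule axioms, the quartic A-infinity identity says that
  \<open>\<mu>3\<close> is a Hochschild cocycle, the three lower homotopy Nijenhuis conditions are the
  Nijenhuis identities, and the top one is the cocycle equation relating \<open>N2\<close> and \<open>\<mu>3\<close>.
  The correspondence itself is then only a regrouping of the data.\<close>

lemma linear_map_0: "Vector_Spaces.linear s1 s2 f \<Longrightarrow> f 0 = 0"
  by (metis linear_iff_module_hom module_hom.zero)

lemma bilin_0_left: "bilin s1 s2 s3 f \<Longrightarrow> f 0 y = 0"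
  and bilin_0_right: "bilin s1 s2 s3 f \<Longrightarrow> f x 0 = 0"
  unfolding bilin_def by (auto intro: linear_map_0[of s1 s3 "\<lambda>x. f x y"] linear_map_0)

lemma trilin_0_first: "trilin s1 s3 f \<Longrightarrow> f 0 y z = 0"
  and trilin_0_second: "trilin s1 s3 f \<Longrightarrow> f x 0 z = 0"
  and trilin_0_third: "trilin s1 s3 f \<Longrightarrow> f x y 0 = 0"
  unfolding trilin_def
  by (auto intro: linear_map_0[of s1 s3 "\<lambda>x. f x y z"] linear_map_0[of s1 s3 "\<lambda>y. f x y z"]
      linear_map_0)

lemma partial_NNM3_expand:
  "partial_NNM3 N NM f a b c =
     f (N a) (N b) (N c) - NM (f (N a) (N b) c) - NM (f (N a) b (N c))
     - NM (f a (N b) (N c)) + (NM ^^ 2) (f (N a) b c) + (NM ^^ 2) (f a (N b) c)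
     + (NM ^^ 2) (f a b (N c)) - (NM ^^ 3) (f a b c)"
proof -
  have subsets: "Pow {1::nat, 2, 3} = {{}, {1}, {2}, {3}, {1, 2}, {1, 3}, {2, 3}, {1, 2, 3}}"
    by (auto simp: Pow_insert)
  have funpow_2_3: "(g ^^ 2) x = g (g x)" "(g ^^ 3) x = g (g (g x))" for g x
    by (simp_all add: numeral_2_eq_2 numeral_3_eq_3)
  show ?thesis
    unfolding partial_NNM3_def subsets
    by (simp add: doubleton_eq_iff insert_eq_iff algebra_simps funpow_2_3)
qed

lemma two_term_Ainf_skeletal_iff:
  assumes "Vector_Spaces.vector_space sA" and "Vector_Spaces.vector_space sM"
  shows "two_term_Ainf sA sM (\<lambda>_. 0) m l r chi \<longleftrightarrow>
    bilin sA sA sA m \<and> bilin sA sM sM l \<and> bilin sM sA sM r \<and> trilin sA sM chi \<and>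
    (\<forall>a b c. m (m a b) c = m a (m b c)) \<and>
    (\<forall>a b u. l (m a b) u = l a (l b u)) \<and>
    (\<forall>a u b. r (l a u) b = l a (r u b)) \<and>
    (\<forall>u a b. r (r u a) b = r u (m a b)) \<and>
    (\<forall>a b c e. hoch_delta3 m l r chi a b c e = 0)"
proof -
  have "Vector_Spaces.linear sM sA (\<lambda>_. 0)"
    using assms by (simp add: vector_space_pair.linear_zero vector_space_pair_def)
  then show ?thesis
    unfolding two_term_Ainf_def hoch_delta3_def
    by (auto simp: bilin_0_left bilin_0_right trilin_0_first trilin_0_second trilin_0_third
        eq_iff_diff_eq_0[symmetric])
qed

lemma homotopy_Nijenhuis_op_skeletal_iff:
  assumes "bilin sA sM sM l" and "bilin sM sA sM r"
  shows "homotopy_Nijenhuis_op sA sM (\<lambda>_. 0) m l r chi N NM F \<longleftrightarrow>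
    Vector_Spaces.linear sA sA N \<and> Vector_Spaces.linear sM sM NM \<and> bilin sA sA sM F \<and>
    (\<forall>a b. m (N a) (N b) = N (nij_prod m N a b)) \<and>
    (\<forall>a u. l (N a) (NM u) = NM (l (N a) u + l a (NM u) - NM (l a u))) \<and>
    (\<forall>u a. r (NM u) (N a) = NM (r (NM u) a + r u (N a) - NM (r u a))) \<and>
    (\<forall>a b c. d_NNM2 m N l r NM F a b c = partial_NNM3 N NM chi a b c)"
  unfolding homotopy_Nijenhuis_op_def d_NNM2_def hoch_delta2_def partial_NNM3_expand
  using assms
  by (auto simp: linear_map_0 bilin_0_left bilin_0_right eq_iff_diff_eq_0[symmetric])

lemma skeletal_2term_hNA_iff:
  assumes "Vector_Spaces.vector_space sA" and "Vector_Spaces.vector_space sM"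
  shows "skeletal_2term_hNA sA sM m l r chi N NM F \<longleftrightarrow>
    Nijenhuis_algebra sA m N \<and> Nijenhuis_bimodule sA sM m N l r NM \<and>
    NAlg_3cocycle sA sM m N l r NM chi F"
  unfolding skeletal_2term_hNA_def Nijenhuis_algebra_def Nijenhuis_bimodule_def
    NAlg_3cocycle_def two_term_Ainf_skeletal_iff[OF assms]
  by (auto simp: homotopy_Nijenhuis_op_skeletal_iff)

theorem theorem6p4:
  fixes sA :: "'k::field_char_0 \<Rightarrow> 'a::ab_group_add \<Rightarrow> 'a"
    and sM :: "'k \<Rightarrow> 'm::ab_group_add \<Rightarrow> 'm"
  assumes "Vector_Spaces.vector_space sA" and "Vector_Spaces.vector_space sM"
  shows "bij_betw
    (\<lambda>(m00, m01, m10, m3, N0, N1, N2). ((m00, N0), ((m01, m10, N1), (m3, N2))))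
    {(m00, m01, m10, m3, N0, N1, N2). skeletal_2term_hNA sA sM m00 m01 m10 m3 N0 N1 N2}
    {((m, N), ((l, r, NM), (chi, F))).
       Nijenhuis_algebra sA m N \<and> Nijenhuis_bimodule sA sM m N l r NM \<and>
       NAlg_3cocycle sA sM m N l r NM chi F}"
  by (rule bij_betw_byWitness[where f' = "\<lambda>((m, N), ((l, r, NM), (chi, F))). (m, l, r, chi, N, NM, F)"])
    (auto simp: skeletal_2term_hNA_iff[OF assms])

end
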